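(* Let $R$ be a ring with unity and involution $*$, and let $a\in R$. The following statements are equivalent. (1) $a$ is Moore-Penrose invertible. (2) $a^*a$ is strongly left $(a^*,a)$-invertible. (3) $aa^*$ is strongly left $(a,a^* )$-invertible.
   Context: $a$ is Moore-Penrose invertible if there exists $x\in R$ with $axa=a$, $xax=x$, $(ax)^*=ax$, $(xa)^*=xa$. For $u,b,c\in R$, $u$ is strongly left $(b,c)$-invertible if $b\in Rcub$ and $cub$ is regular (there exists $z$ with $cub\,z\,cub=cub$). *)

theory Defs
  imports Main
begin

class ring_inv = ring_1 +
  fixes inv_star :: "'a \<Rightarrow> 'a"  ("_\<^sup>\<star>" [1000] 999)
  assumes star_add: "(x + y)\<^sup>\<star> = x\<^sup>\<star> + y\<^sup>\<star>"
    and star_mult: "(x * y)\<^sup>\<star> = y\<^sup>\<star> * x\<^sup>\<star>"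
    and star_star: "(x\<^sup>\<star>)\<^sup>\<star> = x"

definition MP_invertible :: "'a::ring_inv \<Rightarrow> bool" where
  "MP_invertible a \<longleftrightarrow> (\<exists>x. a * x * a = a \<and> x * a * x = x \<and>
      (a * x)\<^sup>\<star> = a * x \<and> (x * a)\<^sup>\<star> = x * a)"

definition regular :: "'a::ring_1 \<Rightarrow> bool" where
  "regular a \<longleftrightarrow> (\<exists>z. a * z * a = a)"

definition strongly_left_invertible :: "'a::ring_1 \<Rightarrow> 'a \<Rightarrow> 'a \<Rightarrow> bool" where
  "strongly_left_invertible u b c \<longleftrightarrow> (\<exists>r. b = r * (c * u * b)) \<and> regular (c * u * b)"

end

theory Submission
  imports Defs
begin

text \<open>Both conditions reduce to the classical criterion: \<open>a\<close> is Moore-Penrose invertible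
  iff \<open>a \<in> a a\<^sup>\<star> R \<inter> R a\<^sup>\<star> a\<close>, and then \<open>a\<^sup>\<dagger> = u\<^sup>\<star> a v\<^sup>\<star>\<close> for \<open>a = a a\<^sup>\<star> u = v a\<^sup>\<star> a\<close>.
  Taking involutions, \<open>a\<^sup>\<star> = r (a a\<^sup>\<star>)\<^sup>2\<close> says \<open>a \<in> (a a\<^sup>\<star>)\<^sup>2 R \<subseteq> a a\<^sup>\<star> a R\<close>, and
  \<open>a \<in> a a\<^sup>\<star> a R\<close> already forces \<open>a \<in> R a\<^sup>\<star> a\<close>.  Conversely the two factorizations give
  \<open>a a\<^sup>\<star> \<in> (a a\<^sup>\<star>)\<^sup>2 R \<inter> R (a a\<^sup>\<star>)\<^sup>2\<close>, which yields both the required factorization of \<open>a\<^sup>\<star>\<close>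
  and the regularity of \<open>(a a\<^sup>\<star>)\<^sup>2\<close>.  Statement (3) is statement (2) for \<open>a\<^sup>\<star>\<close>.\<close>

lemma star_eq_iff_eq_star:
  fixes x y :: "'a::ring_inv"
  shows "x\<^sup>\<star> = y \<longleftrightarrow> x = y\<^sup>\<star>"
  by (metis star_star)

lemma right_factorization_star_iff:
  fixes a u :: "'a::ring_inv"
  shows "a = a * a\<^sup>\<star> * u \<longleftrightarrow> a\<^sup>\<star> = u\<^sup>\<star> * a * a\<^sup>\<star>"
  by (simp add: star_eq_iff_eq_star star_mult star_star mult.assoc)

lemma left_factorization_star_iff:
  fixes a v :: "'a::ring_inv"
  shows "a = v * a\<^sup>\<star> * a \<longleftrightarrow> a\<^sup>\<star> = a\<^sup>\<star> * a * v\<^sup>\<star>"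
  by (simp add: star_eq_iff_eq_star star_mult star_star mult.assoc)

lemma regular_square_if_factorizations:
  fixes b :: "'a::ring_1"
  assumes "b = b * b * s" and "b = t * b * b"
  shows "regular (b * b)"
proof -
  have "b * b * (s * t) * (b * b) = (b * b * s) * (t * b * b)"
    by (simp add: mult.assoc)
  also have "\<dots> = b * b"
    using assms by simp
  finally show ?thesis
    unfolding regular_def by blast
qed

lemma MP_invertible_if_factorizations:
  fixes a :: "'a::ring_inv"
  assumes u: "a = a * a\<^sup>\<star> * u" and v: "a = v * a\<^sup>\<star> * a"
  shows "MP_invertible a"
proof -
  have u': "a\<^sup>\<star> = u\<^sup>\<star> * a * a\<^sup>\<star>"
    using u by (rule right_factorization_star_iff[THEN iffD1])
  have v': "a\<^sup>\<star> = a\<^sup>\<star> * a * v\<^sup>\<star>"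
    using v by (rule left_factorization_star_iff[THEN iffD1])
  define x where "x = u\<^sup>\<star> * a * v\<^sup>\<star>"
  have p: "v * a\<^sup>\<star> = a * v\<^sup>\<star>"
    by (subst v') (metis v mult.assoc)
  have q: "a\<^sup>\<star> * u = u\<^sup>\<star> * a"
    by (subst u') (metis u mult.assoc)
  have ax: "a * x = a * v\<^sup>\<star>"
    unfolding x_def by (metis q u mult.assoc)
  have xa: "x * a = u\<^sup>\<star> * a"
    unfolding x_def by (metis p v mult.assoc)
  have "a * x * a = a"
    by (metis ax p v mult.assoc)
  moreover have "x * a * x = x"
  proof -
    have "x * a * x = u\<^sup>\<star> * a * (u\<^sup>\<star> * a * v\<^sup>\<star>)"
      unfolding xa by (simp add: x_def)
    also have "\<dots> = x"
      unfolding x_def by (metis q u mult.assoc)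
    finally show ?thesis .
  qed
  moreover have "(a * x)\<^sup>\<star> = a * x"
    unfolding ax by (metis p star_mult star_star)
  moreover have "(x * a)\<^sup>\<star> = x * a"
    unfolding xa by (metis q star_mult star_star)
  ultimately show ?thesis
    unfolding MP_invertible_def by blast
qed

lemma MP_invertible_iff_factorizations:
  fixes a :: "'a::ring_inv"
  shows "MP_invertible a \<longleftrightarrow> (\<exists>u. a = a * a\<^sup>\<star> * u) \<and> (\<exists>v. a = v * a\<^sup>\<star> * a)"
proof
  assume "MP_invertible a"
  then obtain x where "a * x * a = a" "(a * x)\<^sup>\<star> = a * x" "(x * a)\<^sup>\<star> = x * a"
    unfolding MP_invertible_def by blast
  then have "a = a * a\<^sup>\<star> * x\<^sup>\<star>" and "a = x\<^sup>\<star> * a\<^sup>\<star> * a"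
    by (metis star_mult mult.assoc)+
  then show "(\<exists>u. a = a * a\<^sup>\<star> * u) \<and> (\<exists>v. a = v * a\<^sup>\<star> * a)"
    by blast
qed (blast intro: MP_invertible_if_factorizations)

lemma MP_invertible_star:
  fixes a :: "'a::ring_inv"
  assumes "MP_invertible a"
  shows "MP_invertible (a\<^sup>\<star>)"
proof -
  obtain u v where "a = a * a\<^sup>\<star> * u" and "a = v * a\<^sup>\<star> * a"
    using assms unfolding MP_invertible_iff_factorizations by blast
  then have "a\<^sup>\<star> = a\<^sup>\<star> * (a\<^sup>\<star>)\<^sup>\<star> * v\<^sup>\<star>" and "a\<^sup>\<star> = u\<^sup>\<star> * (a\<^sup>\<star>)\<^sup>\<star> * a\<^sup>\<star>"
    by (simp_all only: left_factorization_star_iff right_factorization_star_iff star_star)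
  then show ?thesis
    by (rule MP_invertible_if_factorizations)
qed

lemma MP_invertible_star_iff:
  fixes a :: "'a::ring_inv"
  shows "MP_invertible (a\<^sup>\<star>) \<longleftrightarrow> MP_invertible a"
  using MP_invertible_star[of a] MP_invertible_star[of "a\<^sup>\<star>"] unfolding star_star by blast

lemma left_factorization_if_right:
  fixes a :: "'a::ring_inv"
  assumes t: "a = a * a\<^sup>\<star> * a * t"
  shows "a = a * t\<^sup>\<star> * a\<^sup>\<star> * a"
proof -
  define q where "q = a\<^sup>\<star> * a * t"
  have "a\<^sup>\<star> = t\<^sup>\<star> * a\<^sup>\<star> * a * a\<^sup>\<star>"
    using t by (simp add: star_eq_iff_eq_star star_mult star_star mult.assoc)
  then have "q = t\<^sup>\<star> * a\<^sup>\<star> * a * a\<^sup>\<star> * a * t"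
    unfolding q_def by (metis mult.assoc)
  then have "q\<^sup>\<star> = q"
    by (simp add: star_mult star_star mult.assoc)
  moreover have "a = a * q"
    unfolding q_def using t by (simp add: mult.assoc)
  ultimately have "a = a * q\<^sup>\<star>"
    by simp
  then show ?thesis
    unfolding q_def by (simp add: star_mult star_star mult.assoc)
qed

lemma MP_invertible_iff_strongly_left_invertible:
  fixes a :: "'a::ring_inv"
  shows "MP_invertible a \<longleftrightarrow> strongly_left_invertible (a\<^sup>\<star> * a) (a\<^sup>\<star>) a"
proof
  assume "MP_invertible a"
  then obtain u v where u: "a = a * a\<^sup>\<star> * u" and v: "a = v * a\<^sup>\<star> * a"
    unfolding MP_invertible_iff_factorizations by blast
  have u': "a\<^sup>\<star> = u\<^sup>\<star> * a * a\<^sup>\<star>"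
    using u by (rule right_factorization_star_iff[THEN iffD1])
  have v': "a\<^sup>\<star> = a\<^sup>\<star> * a * v\<^sup>\<star>"
    using v by (rule left_factorization_star_iff[THEN iffD1])
  define b where "b = a * a\<^sup>\<star>"
  have right: "b = b * b * (u * v\<^sup>\<star>)"
    unfolding b_def by (metis u v' mult.assoc)
  have left: "b = (v * u\<^sup>\<star>) * b * b"
    unfolding b_def by (metis u' v mult.assoc)
  have "a\<^sup>\<star> = (u\<^sup>\<star> * v * u\<^sup>\<star>) * (a * (a\<^sup>\<star> * a) * a\<^sup>\<star>)"
    by (metis u' left b_def mult.assoc)
  moreover have "regular (a * (a\<^sup>\<star> * a) * a\<^sup>\<star>)"
    using regular_square_if_factorizations[OF right left] by (simp add: b_def mult.assoc)
  ultimately show "strongly_left_invertible (a\<^sup>\<star> * a) (a\<^sup>\<star>) a"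
    unfolding strongly_left_invertible_def by blast
next
  assume "strongly_left_invertible (a\<^sup>\<star> * a) (a\<^sup>\<star>) a"
  then obtain r where "a\<^sup>\<star> = r * (a * (a\<^sup>\<star> * a) * a\<^sup>\<star>)"
    unfolding strongly_left_invertible_def by blast
  then have t: "a = a * a\<^sup>\<star> * a * (a\<^sup>\<star> * r\<^sup>\<star>)"
    by (simp add: star_eq_iff_eq_star star_mult star_star mult.assoc)
  show "MP_invertible a"
  proof (rule MP_invertible_if_factorizations)
    show "a = a * a\<^sup>\<star> * (a * (a\<^sup>\<star> * r\<^sup>\<star>))"
      using t by (simp add: mult.assoc)
    show "a = (a * (a\<^sup>\<star> * r\<^sup>\<star>)\<^sup>\<star>) * a\<^sup>\<star> * a"
      using left_factorization_if_right[OF t] by (simp add: mult.assoc)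
  qed
qed

theorem corollary3p14:
  fixes a :: "'a::ring_inv"
  shows "(MP_invertible a \<longleftrightarrow> strongly_left_invertible (a\<^sup>\<star> * a) (a\<^sup>\<star>) a)
       \<and> (MP_invertible a \<longleftrightarrow> strongly_left_invertible (a * a\<^sup>\<star>) a (a\<^sup>\<star>))"
  using MP_invertible_iff_strongly_left_invertible[of a]
    MP_invertible_iff_strongly_left_invertible[of "a\<^sup>\<star>"]
  by (simp add: MP_invertible_star_iff star_star)

end
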